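(* Let $A$ be a binary matrix and let $U$ be a binary base of $A$ that is disjoint in rows. If, in addition, $A$ has the Unique base rows sums property, then $U$ spans (in the binary sense) every binary base of $A$, and thus $A$ has the Augmentation property for the binary rank.
   Context: For a binary $n\times m$ matrix $A$, $R_{binary}(A)$ is the least $k$ with $A=UV$, $U\in\{0,1\}^{n\times k}$, $V\in\{0,1\}^{k\times m}$, ordinary arithmetic; a decomposition with $k=R_{binary}(A)$ is an optimal binary decomposition. A set $X$ of $\{0,1\}$-vectors spans $y$ (binary sense) if $y=\sum_{x\in X}c_xx$ with $c_x\in\{0,1\}$, ordinary addition; it spans a set $Y$ if it spans each vector of $Y$. A binary base of $A$ is a set of $\{0,1\}$ column vectors spanning every column of $A$, of minimum cardinality among such spanning sets. A base is disjoint in rows if no two distinct vectors of it have a $1$ in the same coordinate. $A$ has the Unique base rows sums property if for every optimal binary decomposition $A=X\cdot Y$ there are no two disjoint nonempty sets of row indices $\{i_1,\dots,i_s\}$, $\{j_1,\dots,j_t\}$ with $y_{i_1}+\dots+y_{i_s}=y_{j_1}+\dots+y_{j_t}$ ($y_i$ the rows of $Y$). $A$ has the Augmentation property for the binary rank if for all binary column vectors $x_1,\dots,x_t$ with $R_{binary}(A|x_i)=R_{binary}(A)$ for all $i$, also $R_{binary}(A|x_1,\dots,x_t)=R_{binary}(A)$, where $(A|x_1,\dots,x_t)$ is $A$ with these columns appended. *)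

theory Defs
  imports "Jordan_Normal_Form.Matrix"
begin

text \<open>Binary matrices and vectors: entries in {0,1}, stored as natural numbers;
  products and sums are ordinary arithmetic over nat.\<close>

definition binary_mat :: "nat mat \<Rightarrow> bool" where
  "binary_mat A \<longleftrightarrow> (\<forall>i<dim_row A. \<forall>j<dim_col A. A $$ (i,j) \<in> {0,1})"

definition binary_vec :: "nat vec \<Rightarrow> bool" where
  "binary_vec v \<longleftrightarrow> (\<forall>i<dim_vec v. v $ i \<in> {0,1})"

definition binary_decomp :: "nat mat \<Rightarrow> nat \<Rightarrow> nat mat \<Rightarrow> nat mat \<Rightarrow> bool" where
  "binary_decomp A k U V \<longleftrightarrow>
     U \<in> carrier_mat (dim_row A) k \<and> V \<in> carrier_mat k (dim_col A) \<and>
     binary_mat U \<and> binary_mat V \<and> A = U * V"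

definition binary_rank :: "nat mat \<Rightarrow> nat" where
  "binary_rank A = (LEAST k. \<exists>U V. binary_decomp A k U V)"

definition optimal_binary_decomp :: "nat mat \<Rightarrow> nat mat \<Rightarrow> nat mat \<Rightarrow> bool" where
  "optimal_binary_decomp A U V \<longleftrightarrow> binary_decomp A (binary_rank A) U V"

definition bspans :: "nat vec set \<Rightarrow> nat vec \<Rightarrow> bool" where
  "bspans X y \<longleftrightarrow> (\<forall>x\<in>X. dim_vec x = dim_vec y) \<and>
     (\<exists>S\<subseteq>X. finite S \<and> (\<forall>i<dim_vec y. y $ i = (\<Sum>x\<in>S. x $ i)))"

definition bspans_set :: "nat vec set \<Rightarrow> nat vec set \<Rightarrow> bool" where
  "bspans_set X Y \<longleftrightarrow> (\<forall>y\<in>Y. bspans X y)"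

definition spanning_binary_set :: "nat mat \<Rightarrow> nat vec set \<Rightarrow> bool" where
  "spanning_binary_set A X \<longleftrightarrow> finite X \<and>
     (\<forall>x\<in>X. binary_vec x \<and> dim_vec x = dim_row A) \<and>
     (\<forall>j<dim_col A. bspans X (col A j))"

definition binary_base :: "nat mat \<Rightarrow> nat vec set \<Rightarrow> bool" where
  "binary_base A X \<longleftrightarrow> spanning_binary_set A X \<and>
     (\<forall>X'. spanning_binary_set A X' \<longrightarrow> card X \<le> card X')"

definition disjoint_in_rows :: "nat vec set \<Rightarrow> bool" where
  "disjoint_in_rows X \<longleftrightarrow>
     (\<forall>u\<in>X. \<forall>v\<in>X. u \<noteq> v \<longrightarrow> (\<forall>i<min (dim_vec u) (dim_vec v). \<not> (u $ i = 1 \<and> v $ i = 1)))"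

definition unique_base_rows_sums :: "nat mat \<Rightarrow> bool" where
  "unique_base_rows_sums A \<longleftrightarrow>
     (\<forall>X Y. optimal_binary_decomp A X Y \<longrightarrow>
        \<not> (\<exists>I J. I \<subseteq> {..<dim_row Y} \<and> J \<subseteq> {..<dim_row Y} \<and> I \<noteq> {} \<and> J \<noteq> {} \<and>
               I \<inter> J = {} \<and>
               (\<forall>c<dim_col Y. (\<Sum>i\<in>I. Y $$ (i,c)) = (\<Sum>j\<in>J. Y $$ (j,c)))))"

definition append_cols :: "nat mat \<Rightarrow> nat vec list \<Rightarrow> nat mat" where
  "append_cols A xs = mat (dim_row A) (dim_col A + length xs)
     (\<lambda>(i,j). if j < dim_col A then A $$ (i,j) else (xs ! (j - dim_col A)) $ i)"

definition augmentation_property :: "nat mat \<Rightarrow> bool" where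
  "augmentation_property A \<longleftrightarrow>
     (\<forall>xs. (\<forall>x\<in>set xs. binary_vec x \<and> dim_vec x = dim_row A \<and>
              binary_rank (append_cols A [x]) = binary_rank A) \<longrightarrow>
           binary_rank (append_cols A xs) = binary_rank A)"

end

theory Submission
  imports Defs
begin

text \<open>If the vectors of U have disjoint supports, U spans exactly the binary vectors that are
  constant on each support and vanish outside all of them. The columns of A are of this kind,
  so rows of A agree within each support and vanish outside. Write a base B as the columns of X
  in an optimal decomposition A = X Y; by optimality no row of Y vanishes, so zero rows of A come
  from zero rows of X, and by the unique row sums property equal rows of A come from equal rows
  of X. Hence every vector of B is constant on the supports and is spanned by U. A column x with
  rank (A|x) = rank A is a sum of vectors of a base of (A|x), which is also a base of A; so U
  spans all such columns, and then U spans the whole augmented matrix.\<close>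

definition constant_on_supports :: "nat vec set \<Rightarrow> nat \<Rightarrow> nat vec \<Rightarrow> bool" where
  "constant_on_supports U n y \<longleftrightarrow>
     (\<forall>u\<in>U. \<forall>i<n. \<forall>i'<n. u $ i = 1 \<and> u $ i' = 1 \<longrightarrow> y $ i = y $ i') \<and>
     (\<forall>i<n. (\<forall>u\<in>U. u $ i \<noteq> 1) \<longrightarrow> y $ i = 0)"

lemma binary_vec_cases: "binary_vec v \<Longrightarrow> i < dim_vec v \<Longrightarrow> v $ i = 0 \<or> v $ i = 1"
  unfolding binary_vec_def by auto

lemma binary_mat_cases:
  "binary_mat A \<Longrightarrow> i < dim_row A \<Longrightarrow> j < dim_col A \<Longrightarrow> A $$ (i,j) = 0 \<or> A $$ (i,j) = 1"
  unfolding binary_mat_def by auto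

lemma sum_coord_disjoint_in_rows:
  assumes dis: "disjoint_in_rows U" and U: "\<forall>u\<in>U. binary_vec u \<and> dim_vec u = n"
    and R: "R \<subseteq> U" "finite R" and u0: "u0 \<in> U" "i < n" "u0 $ i = 1"
  shows "(\<Sum>u\<in>R. u $ i) = (if u0 \<in> R then 1 else 0)"
proof -
  have "u $ i = 0" if "u \<in> R - {u0}" for u
  proof -
    have "u \<in> U" "u \<noteq> u0" using that R by auto
    then have "u $ i \<noteq> 1" using dis u0 U unfolding disjoint_in_rows_def by auto
    then show ?thesis using binary_vec_cases[of u i] U \<open>u \<in> U\<close> u0 by auto
  qed
  then have "(\<Sum>u\<in>R. u $ i) = (\<Sum>u\<in>R \<inter> {u0}. u $ i)"
    using R by (intro sum.mono_neutral_right) auto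
  then show ?thesis using u0 by (cases "u0 \<in> R") auto
qed

lemma sum_coord_outside_supports:
  assumes "\<forall>u\<in>U. binary_vec u \<and> dim_vec u = n" "R \<subseteq> U" "i < n" "\<forall>u\<in>U. u $ i \<noteq> 1"
  shows "(\<Sum>u\<in>R. u $ i) = 0"
proof (rule sum.neutral, rule ballI)
  fix u assume "u \<in> R"
  then show "u $ i = 0" using assms binary_vec_cases[of u i] by auto
qed

lemma bspans_imp_constant_on_supports:
  assumes dis: "disjoint_in_rows U" and U: "\<forall>u\<in>U. binary_vec u \<and> dim_vec u = n"
    and "bspans U y" "dim_vec y = n"
  shows "constant_on_supports U n y"
proof -
  obtain R where R: "R \<subseteq> U" "finite R" and y: "\<forall>i<n. y $ i = (\<Sum>u\<in>R. u $ i)"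
    using assms(3,4) unfolding bspans_def by auto
  show ?thesis
    unfolding constant_on_supports_def
  proof (intro conjI ballI allI impI)
    fix u i i' assume "u \<in> U" "i < n" "i' < n" "u $ i = 1 \<and> u $ i' = 1"
    then show "y $ i = y $ i'"
      using y sum_coord_disjoint_in_rows[OF dis U R, of u] by simp
  next
    fix i assume "i < n" "\<forall>u\<in>U. u $ i \<noteq> 1"
    then show "y $ i = 0" using y sum_coord_outside_supports[OF U R(1)] by simp
  qed
qed

text \<open>The spanning subset consists of those u that meet the support of y.\<close>

lemma constant_on_supports_imp_bspans:
  assumes dis: "disjoint_in_rows U" and U: "\<forall>u\<in>U. binary_vec u \<and> dim_vec u = n"
    and fin: "finite U" and y: "binary_vec y" "dim_vec y = n" "constant_on_supports U n y"
  shows "bspans U y"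
proof -
  define R where "R = {u\<in>U. \<exists>i<n. u $ i = 1 \<and> y $ i = 1}"
  have R: "R \<subseteq> U" "finite R" using fin unfolding R_def by auto
  have "y $ i = (\<Sum>u\<in>R. u $ i)" if i: "i < n" for i
  proof (cases "\<exists>u0\<in>U. u0 $ i = 1")
    case True
    then obtain u0 where u0: "u0 \<in> U" "u0 $ i = 1" by auto
    have "u0 \<in> R \<longleftrightarrow> y $ i = 1"
    proof
      assume "u0 \<in> R"
      then obtain i' where "i' < n" "u0 $ i' = 1" "y $ i' = 1" unfolding R_def by auto
      then show "y $ i = 1" using y(3) u0 i unfolding constant_on_supports_def by metis
    qed (use u0 i in \<open>auto simp: R_def\<close>)
    then show ?thesis
      using sum_coord_disjoint_in_rows[OF dis U R u0(1) i u0(2)] binary_vec_cases[OF y(1)] i y(2)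
      by auto
  next
    case False
    then show ?thesis
      using y(3) i sum_coord_outside_supports[OF U R(1) i] unfolding constant_on_supports_def by auto
  qed
  then show ?thesis unfolding bspans_def using R U y(2) by auto
qed

lemma constant_on_supports_sum:
  assumes "\<forall>b\<in>S. constant_on_supports U n b" and "\<forall>i<n. y $ i = (\<Sum>b\<in>S. b $ i)"
  shows "constant_on_supports U n y"
  unfolding constant_on_supports_def
proof (intro conjI ballI allI impI)
  fix u i i' assume "u \<in> U" "i < n" "i' < n" "u $ i = 1 \<and> u $ i' = 1"
  then have "\<forall>b\<in>S. b $ i = b $ i'" using assms(1) unfolding constant_on_supports_def by blast
  then show "y $ i = y $ i'" using assms(2) \<open>i < n\<close> \<open>i' < n\<close> by simp
next
  fix i assume "i < n" "\<forall>u\<in>U. u $ i \<noteq> 1"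
  then have "\<forall>b\<in>S. b $ i = 0" using assms(1) unfolding constant_on_supports_def by blast
  then show "y $ i = 0" using assms(2) \<open>i < n\<close> by simp
qed

lemma binary_decomp_entry:
  assumes "binary_decomp A k U V" "i < dim_row A" "c < dim_col A"
  shows "A $$ (i,c) = (\<Sum>l<k. U $$ (i,l) * V $$ (l,c))"
proof -
  have U: "U \<in> carrier_mat (dim_row A) k" and V: "V \<in> carrier_mat k (dim_col A)"
    and A: "A = U * V"
    using assms(1) unfolding binary_decomp_def by auto
  have "A $$ (i,c) = row U i \<bullet> col V c"
    using A U V assms(2,3) by (metis carrier_matD index_mult_mat(1))
  also have "\<dots> = (\<Sum>l<k. U $$ (i,l) * V $$ (l,c))"
    using U V assms(2,3) by (simp add: scalar_prod_def atLeast0LessThan)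
  finally show ?thesis .
qed

lemma binary_decomp_of_spanning_set:
  assumes sp: "spanning_binary_set A X"
  obtains U V where "binary_decomp A (card X) U V" "col U ` {..<card X} = X"
proof -
  let ?n = "dim_row A" and ?m = "dim_col A"
  have fin: "finite X" and X: "\<forall>x\<in>X. binary_vec x \<and> dim_vec x = ?n"
    using sp unfolding spanning_binary_set_def by auto
  obtain xs where xs: "set xs = X" "distinct xs" using finite_distinct_list[OF fin] by auto
  have len: "length xs = card X" using xs distinct_card by metis
  have bij: "bij_betw ((!) xs) {..<card X} X" using bij_betw_nth xs len by metis
  have "\<exists>S. S \<subseteq> X \<and> (\<forall>i<?n. A $$ (i,c) = (\<Sum>x\<in>S. x $ i))" if "c < ?m" for c
  proof -
    have "bspans X (col A c)" using sp that unfolding spanning_binary_set_def by blast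
    then show ?thesis using that unfolding bspans_def by auto
  qed
  then obtain Sj where Sj: "\<And>c. c < ?m \<Longrightarrow> Sj c \<subseteq> X \<and> (\<forall>i<?n. A $$ (i,c) = (\<Sum>x\<in>Sj c. x $ i))"
    by metis
  define U where "U = mat ?n (card X) (\<lambda>(i,l). xs ! l $ i)"
  define V where "V = mat (card X) ?m (\<lambda>(l,c). if xs ! l \<in> Sj c then (1::nat) else 0)"
  have colU: "col U l = xs ! l" if "l < card X" for l
    using that xs X len unfolding U_def by (intro eq_vecI) auto
  have "xs ! l \<in> X" if "l < card X" for l using that xs len by auto
  then have "binary_mat U"
    unfolding binary_mat_def U_def using X by (auto simp: binary_vec_def)
  moreover have "binary_mat V" unfolding binary_mat_def V_def by auto
  moreover have "A = U * V"
  proof (rule eq_matI)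
    fix i c assume "i < dim_row (U * V)" "c < dim_col (U * V)"
    then have ic: "i < ?n" "c < ?m" unfolding U_def V_def by auto
    have "(U * V) $$ (i,c) = (\<Sum>l<card X. xs ! l $ i * (if xs ! l \<in> Sj c then 1 else 0))"
      using ic unfolding U_def V_def by (simp add: scalar_prod_def atLeast0LessThan)
    also have "\<dots> = (\<Sum>x\<in>X. x $ i * (if x \<in> Sj c then 1 else 0))"
      using sum.reindex_bij_betw[OF bij] .
    also have "\<dots> = (\<Sum>x\<in>X. if x \<in> Sj c then x $ i else 0)"
      by (intro sum.cong) auto
    also have "\<dots> = (\<Sum>x\<in>Sj c. x $ i)"
      using Sj[OF ic(2)] fin by (simp add: sum.inter_restrict[symmetric] Int_absorb1 Int_commute)
    finally show "A $$ (i,c) = (U * V) $$ (i,c)" using Sj[OF ic(2)] ic(1) by simp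
  qed (auto simp: U_def V_def)
  ultimately have "binary_decomp A (card X) U V"
    unfolding binary_decomp_def U_def V_def by auto
  moreover have "col U ` {..<card X} = X"
  proof -
    have "col U ` {..<card X} = (!) xs ` {..<card X}" using colU by (intro image_cong) auto
    then show ?thesis using bij_betw_imp_surj_on[OF bij] by simp
  qed
  ultimately show thesis using that by blast
qed

text \<open>A common 1 in row i of two such columns would make the entry (i,c) of A at least 2.\<close>

lemma binary_decomp_col_inj:
  assumes bA: "binary_mat A" and d: "binary_decomp A k U V" and c: "c < dim_col A"
  shows "inj_on (col U) {l. l < k \<and> V $$ (l,c) = 1 \<and> col U l \<noteq> 0\<^sub>v (dim_row A)}"
proof (rule inj_onI)
  let ?n = "dim_row A"
  fix l l' assume l: "l \<in> {l. l < k \<and> V $$ (l,c) = 1 \<and> col U l \<noteq> 0\<^sub>v ?n}"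
    and l': "l' \<in> {l. l < k \<and> V $$ (l,c) = 1 \<and> col U l \<noteq> 0\<^sub>v ?n}"
    and eq: "col U l = col U l'"
  have U: "U \<in> carrier_mat ?n k" and bU: "binary_mat U"
    using d unfolding binary_decomp_def by auto
  have "\<exists>i<?n. U $$ (i,l) \<noteq> 0"
  proof (rule ccontr)
    assume "\<not> ?thesis"
    then have "col U l = 0\<^sub>v ?n" using U l by (intro eq_vecI) auto
    then show False using l by simp
  qed
  then obtain i where i: "i < ?n" "U $$ (i,l) \<noteq> 0" by blast
  then have 1: "U $$ (i,l) = 1" using binary_mat_cases[OF bU] U l by fastforce
  then have 2: "U $$ (i,l') = 1" using arg_cong[OF eq, of "\<lambda>v. v $ i"] i U l l' by simp
  show "l = l'"
  proof (rule ccontr)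
    assume "l \<noteq> l'"
    have "(\<Sum>j\<in>{l,l'}. U $$ (i,j) * V $$ (j,c)) \<le> (\<Sum>j<k. U $$ (i,j) * V $$ (j,c))"
      using l l' by (intro sum_mono2) auto
    then have "2 \<le> A $$ (i,c)"
      using \<open>l \<noteq> l'\<close> l l' 1 2 binary_decomp_entry[OF d i(1) c] by simp
    then show False using binary_mat_cases[OF bA i(1) c] by simp
  qed
qed

lemma spanning_set_of_binary_decomp:
  assumes bA: "binary_mat A" and d: "binary_decomp A k U V"
  shows "spanning_binary_set A (col U ` {l. l < k \<and> (\<exists>c<dim_col A. V $$ (l,c) \<noteq> 0)})"
proof -
  let ?n = "dim_row A" and ?L = "{l. l < k \<and> (\<exists>c<dim_col A. V $$ (l,c) \<noteq> 0)}"
  have U: "U \<in> carrier_mat ?n k" and V: "V \<in> carrier_mat k (dim_col A)"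
    and bU: "binary_mat U" and bV: "binary_mat V"
    using d unfolding binary_decomp_def by auto
  have "bspans (col U ` ?L) (col A c)" if c: "c < dim_col A" for c
  proof -
    define Lc where "Lc = {l. l < k \<and> V $$ (l,c) = 1 \<and> col U l \<noteq> 0\<^sub>v ?n}"
    have "(\<Sum>x\<in>col U ` Lc. x $ i) = A $$ (i,c)" if i: "i < ?n" for i
    proof -
      have "(\<Sum>x\<in>col U ` Lc. x $ i) = (\<Sum>l\<in>Lc. col U l $ i)"
        using sum.reindex[OF binary_decomp_col_inj[OF bA d c]] unfolding Lc_def by simp
      also have "\<dots> = (\<Sum>l\<in>Lc. U $$ (i,l) * V $$ (l,c))"
        using i U by (intro sum.cong) (auto simp: Lc_def)
      also have "\<dots> = (\<Sum>l<k. U $$ (i,l) * V $$ (l,c))"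
      proof (rule sum.mono_neutral_left)
        show "\<forall>l\<in>{..<k} - Lc. U $$ (i,l) * V $$ (l,c) = 0"
        proof
          fix l assume l: "l \<in> {..<k} - Lc"
          then have "V $$ (l,c) = 0 \<or> col U l = 0\<^sub>v ?n"
            using binary_mat_cases[OF bV] V c unfolding Lc_def by fastforce
          moreover have "col U l $ i = U $$ (i,l)" using i l U by simp
          ultimately show "U $$ (i,l) * V $$ (l,c) = 0" using i by auto
        qed
      qed (auto simp: Lc_def)
      finally show ?thesis using binary_decomp_entry[OF d i c] by simp
    qed
    moreover have "col U ` Lc \<subseteq> col U ` ?L" using c unfolding Lc_def by fastforce
    ultimately show ?thesis
      unfolding bspans_def using U c by (intro conjI exI[of _ "col U ` Lc"]) (auto simp: Lc_def)
  qed
  moreover have "binary_vec (col U l)" "dim_vec (col U l) = ?n" if "l < k" for l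
    using that U binary_mat_cases[OF bU] by (auto simp: binary_vec_def)
  ultimately show ?thesis unfolding spanning_binary_set_def by auto
qed

lemma spanning_set_of_cols:
  assumes "binary_mat A"
  shows "spanning_binary_set A (col A ` {..<dim_col A})"
proof -
  have "bspans (col A ` {..<dim_col A}) (col A c)" if "c < dim_col A" for c
    unfolding bspans_def using that by (intro conjI exI[of _ "{col A c}"]) auto
  moreover have "binary_vec (col A c)" if "c < dim_col A" for c
    using assms that unfolding binary_mat_def binary_vec_def by auto
  ultimately show ?thesis unfolding spanning_binary_set_def by auto
qed

lemma binary_rank_le_card:
  assumes "spanning_binary_set A X"
  shows "binary_rank A \<le> card X"
proof -
  obtain U V where "binary_decomp A (card X) U V"
    using binary_decomp_of_spanning_set[OF assms] .
  then show ?thesis unfolding binary_rank_def by (blast intro: Least_le)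
qed

lemma binary_rank_decomp:
  assumes "binary_mat A"
  obtains U V where "binary_decomp A (binary_rank A) U V"
proof -
  obtain U V where "binary_decomp A (card (col A ` {..<dim_col A})) U V"
    using binary_decomp_of_spanning_set[OF spanning_set_of_cols[OF assms]] .
  then have "\<exists>k U V. binary_decomp A k U V" by blast
  then have "\<exists>U V. binary_decomp A (LEAST k. \<exists>U V. binary_decomp A k U V) U V"
    by (rule LeastI_ex)
  then show thesis using that unfolding binary_rank_def by blast
qed

lemma ex_spanning_set_card_le_rank:
  assumes "binary_mat A"
  obtains X where "spanning_binary_set A X" "card X \<le> binary_rank A"
proof -
  obtain U V where d: "binary_decomp A (binary_rank A) U V"
    using binary_rank_decomp[OF assms] .
  let ?L = "{l. l < binary_rank A \<and> (\<exists>c<dim_col A. V $$ (l,c) \<noteq> 0)}"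
  have "card ?L \<le> card {..<binary_rank A}" by (rule card_mono) auto
  then have "card (col U ` ?L) \<le> binary_rank A"
    using card_image_le[of ?L "col U"] by simp
  then show thesis using that spanning_set_of_binary_decomp[OF assms d] by blast
qed

lemma binary_base_iff:
  assumes "binary_mat A"
  shows "binary_base A X \<longleftrightarrow> spanning_binary_set A X \<and> card X = binary_rank A"
proof
  assume B: "binary_base A X"
  obtain X' where "spanning_binary_set A X'" "card X' \<le> binary_rank A"
    using ex_spanning_set_card_le_rank[OF assms] .
  then have "card X \<le> binary_rank A" using B unfolding binary_base_def by force
  then show "spanning_binary_set A X \<and> card X = binary_rank A"
    using B binary_rank_le_card[of A X] unfolding binary_base_def by simp
next
  assume "spanning_binary_set A X \<and> card X = binary_rank A"
  then show "binary_base A X" unfolding binary_base_def using binary_rank_le_card by metis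
qed

lemma ex_binary_base:
  assumes "binary_mat A"
  obtains X where "binary_base A X"
proof -
  obtain X where X: "spanning_binary_set A X" "card X \<le> binary_rank A"
    using ex_spanning_set_card_le_rank[OF assms] .
  then have "card X = binary_rank A" using binary_rank_le_card[OF X(1)] by simp
  then show thesis using that X(1) binary_base_iff[OF assms] by blast
qed

text \<open>Otherwise the columns of X used by nonzero rows of Y would span A with fewer than
  binary_rank A vectors.\<close>

lemma optimal_decomp_row_nonzero:
  assumes bA: "binary_mat A" and opt: "optimal_binary_decomp A X Y" and l: "l < binary_rank A"
  shows "\<exists>c<dim_col A. Y $$ (l,c) \<noteq> 0"
proof (rule ccontr)
  assume zero: "\<not> ?thesis"
  let ?L = "{l. l < binary_rank A \<and> (\<exists>c<dim_col A. Y $$ (l,c) \<noteq> 0)}"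
  have d: "binary_decomp A (binary_rank A) X Y" using opt unfolding optimal_binary_decomp_def .
  have "card ?L \<le> card ({..<binary_rank A} - {l})" using zero by (intro card_mono) auto
  then have "card ?L < binary_rank A" using l by simp
  moreover have "binary_rank A \<le> card (col X ` ?L)"
    using binary_rank_le_card[OF spanning_set_of_binary_decomp[OF bA d]] .
  ultimately show False using card_image_le[of ?L "col X"] by simp
qed

lemma optimal_decomp_of_base:
  assumes "binary_mat A" "binary_base A B"
  obtains X Y where "optimal_binary_decomp A X Y" "col X ` {..<binary_rank A} = B"
proof -
  have sp: "spanning_binary_set A B" and card: "card B = binary_rank A"
    using assms binary_base_iff by blast+
  obtain X Y where "binary_decomp A (card B) X Y" "col X ` {..<card B} = B"
    using binary_decomp_of_spanning_set[OF sp] .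
  then show thesis using that card unfolding optimal_binary_decomp_def by simp
qed

lemma optimal_decomp_zero_row:
  assumes bA: "binary_mat A" and opt: "optimal_binary_decomp A X Y"
    and i: "i < dim_row A" and zero: "\<forall>c<dim_col A. A $$ (i,c) = 0" and l: "l < binary_rank A"
  shows "X $$ (i,l) = 0"
proof -
  have d: "binary_decomp A (binary_rank A) X Y" using opt unfolding optimal_binary_decomp_def .
  obtain c where c: "c < dim_col A" "Y $$ (l,c) \<noteq> 0"
    using optimal_decomp_row_nonzero[OF bA opt l] by blast
  have "X $$ (i,l) * Y $$ (l,c) \<le> (\<Sum>j<binary_rank A. X $$ (i,j) * Y $$ (j,c))"
    using l by (intro member_le_sum) auto
  also have "\<dots> = 0" using binary_decomp_entry[OF d i c(1)] zero c(1) by simp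
  finally show ?thesis using c(2) by simp
qed

lemma binary_decomp_entry_support:
  assumes d: "binary_decomp A k X Y" and i: "i < dim_row A" and c: "c < dim_col A"
  shows "A $$ (i,c) = (\<Sum>l\<in>{l. l < k \<and> X $$ (i,l) = 1}. Y $$ (l,c))"
proof -
  have X: "X \<in> carrier_mat (dim_row A) k" and bX: "binary_mat X"
    using d unfolding binary_decomp_def by auto
  have "A $$ (i,c) = (\<Sum>l<k. if X $$ (i,l) = 1 then Y $$ (l,c) else 0)"
    unfolding binary_decomp_entry[OF d i c]
    using binary_mat_cases[OF bX] i X by (intro sum.cong) fastforce+
  also have "\<dots> = (\<Sum>l\<in>{l. l < k \<and> X $$ (i,l) = 1}. Y $$ (l,c))"
    by (simp add: sum.inter_filter[symmetric] lessThan_def Collect_conj_eq)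
  finally show ?thesis .
qed

text \<open>Equal rows of A force equal rows of X: otherwise the rows of Y indexed by the two
  symmetric differences of the supports would be disjoint sets with equal sums.\<close>

lemma optimal_decomp_equal_rows:
  assumes bA: "binary_mat A" and uniq: "unique_base_rows_sums A"
    and opt: "optimal_binary_decomp A X Y"
    and i: "i < dim_row A" "i' < dim_row A" and eq: "\<forall>c<dim_col A. A $$ (i,c) = A $$ (i',c)"
    and l: "l < binary_rank A"
  shows "X $$ (i,l) = X $$ (i',l)"
proof -
  let ?r = "binary_rank A" and ?m = "dim_col A"
  define S where "S j = {l. l < ?r \<and> X $$ (j,l) = 1}" for j
  define I where "I = S i - S i'"
  define J where "J = S i' - S i"
  have d: "binary_decomp A ?r X Y" using opt unfolding optimal_binary_decomp_def .
  have X: "X \<in> carrier_mat (dim_row A) ?r" and bX: "binary_mat X"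
    and Y: "Y \<in> carrier_mat ?r ?m"
    using d unfolding binary_decomp_def by auto
  have fin: "finite (S j)" for j unfolding S_def by auto
  have nonzero: "\<exists>c<?m. (\<Sum>l\<in>T. Y $$ (l,c)) \<noteq> 0" if "T \<subseteq> {..<?r}" "l \<in> T" for T l
  proof -
    have "l < ?r" using that by auto
    then obtain c where c: "c < ?m" "Y $$ (l,c) \<noteq> 0"
      using optimal_decomp_row_nonzero[OF bA opt] by blast
    have "Y $$ (l,c) \<le> (\<Sum>l\<in>T. Y $$ (l,c))"
      using that finite_subset[OF that(1)] by (intro member_le_sum) auto
    then show ?thesis using c by auto
  qed
  have IJ: "(\<Sum>l\<in>I. Y $$ (l,c)) = (\<Sum>l\<in>J. Y $$ (l,c))" if c: "c < ?m" for c
  proof -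
    have "A $$ (i,c) = (\<Sum>l\<in>S i. Y $$ (l,c))"
      unfolding S_def using binary_decomp_entry_support[OF d i(1) c] .
    also have "\<dots> = (\<Sum>l\<in>S i \<inter> S i'. Y $$ (l,c)) + (\<Sum>l\<in>I. Y $$ (l,c))"
      unfolding I_def by (rule sum.Int_Diff[OF fin])
    finally have "A $$ (i,c) = (\<Sum>l\<in>S i \<inter> S i'. Y $$ (l,c)) + (\<Sum>l\<in>I. Y $$ (l,c))" .
    moreover have "A $$ (i',c) = (\<Sum>l\<in>S i'. Y $$ (l,c))"
      unfolding S_def using binary_decomp_entry_support[OF d i(2) c] .
    moreover have "\<dots> = (\<Sum>l\<in>S i \<inter> S i'. Y $$ (l,c)) + (\<Sum>l\<in>J. Y $$ (l,c))"
      unfolding J_def Int_commute[of "S i"] by (rule sum.Int_Diff[OF fin])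
    ultimately show ?thesis using eq c by simp
  qed
  have IJsub: "I \<subseteq> {..<?r}" "J \<subseteq> {..<?r}" "I \<inter> J = {}"
    unfolding I_def J_def S_def by auto
  have "I = {} \<and> J = {}"
  proof (cases "I = {} \<or> J = {}")
    case True
    then show ?thesis using IJ nonzero[OF IJsub(1)] nonzero[OF IJsub(2)] by fastforce
  next
    case False
    then have "\<exists>I J. I \<subseteq> {..<dim_row Y} \<and> J \<subseteq> {..<dim_row Y} \<and> I \<noteq> {} \<and> J \<noteq> {} \<and>
        I \<inter> J = {} \<and> (\<forall>c<dim_col Y. (\<Sum>i\<in>I. Y $$ (i,c)) = (\<Sum>j\<in>J. Y $$ (j,c)))"
      using IJ IJsub Y by (intro exI[of _ I] exI[of _ J]) auto
    then show ?thesis using uniq opt unfolding unique_base_rows_sums_def by blast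
  qed
  then have "X $$ (i,l) = 1 \<longleftrightarrow> X $$ (i',l) = 1"
    using l unfolding I_def J_def S_def by blast
  then show ?thesis using binary_mat_cases[OF bX] i X l by (metis carrier_matD)
qed

lemma base_vector_constant_on_supports:
  assumes bA: "binary_mat A" and U: "binary_base A U" and dis: "disjoint_in_rows U"
    and uniq: "unique_base_rows_sums A" and B: "binary_base A B" and b: "b \<in> B"
  shows "constant_on_supports U (dim_row A) b"
proof -
  let ?n = "dim_row A" and ?m = "dim_col A"
  have spU: "spanning_binary_set A U" using U unfolding binary_base_def by simp
  have Ub: "\<forall>u\<in>U. binary_vec u \<and> dim_vec u = ?n"
    using spU unfolding spanning_binary_set_def by simp
  have colA: "constant_on_supports U ?n (col A c)" if "c < ?m" for c
    using spU that bspans_imp_constant_on_supports[OF dis Ub]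
    unfolding spanning_binary_set_def by simp
  obtain X Y where opt: "optimal_binary_decomp A X Y" and XB: "col X ` {..<binary_rank A} = B"
    using optimal_decomp_of_base[OF bA B] .
  obtain l where l: "l < binary_rank A" "b = col X l" using b XB by blast
  have X: "X \<in> carrier_mat ?n (binary_rank A)"
    using opt unfolding optimal_binary_decomp_def binary_decomp_def by blast
  have b_entry: "b $ i = X $$ (i,l)" if "i < ?n" for i using that l X by simp
  show ?thesis
    unfolding constant_on_supports_def
  proof (intro conjI ballI allI impI)
    fix u i i' assume u: "u \<in> U" "i < ?n" "i' < ?n" "u $ i = 1 \<and> u $ i' = 1"
    have "A $$ (i,c) = A $$ (i',c)" if c: "c < ?m" for c
    proof -
      have "col A c $ i = col A c $ i'"
        using colA[OF c] u unfolding constant_on_supports_def by blast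
      then show ?thesis using c u by simp
    qed
    then show "b $ i = b $ i'"
      using optimal_decomp_equal_rows[OF bA uniq opt \<open>i < ?n\<close> \<open>i' < ?n\<close> _ l(1)]
        b_entry \<open>i < ?n\<close> \<open>i' < ?n\<close> by simp
  next
    fix i assume i: "i < ?n" "\<forall>u\<in>U. u $ i \<noteq> 1"
    have "A $$ (i,c) = 0" if c: "c < ?m" for c
    proof -
      have "col A c $ i = 0" using colA[OF c] i unfolding constant_on_supports_def by blast
      then show ?thesis using c i by simp
    qed
    then show "b $ i = 0"
      using optimal_decomp_zero_row[OF bA opt \<open>i < ?n\<close> _ l(1)] b_entry \<open>i < ?n\<close> by simp
  qed
qed

lemma dim_append_cols [simp]:
  "dim_row (append_cols A xs) = dim_row A"
  "dim_col (append_cols A xs) = dim_col A + length xs"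
  unfolding append_cols_def by simp_all

lemma col_append_cols_old:
  "j < dim_col A \<Longrightarrow> col (append_cols A xs) j = col A j"
  by (rule eq_vecI) (auto simp: append_cols_def)

lemma col_append_cols_new:
  "p < length xs \<Longrightarrow> dim_vec (xs ! p) = dim_row A \<Longrightarrow>
    col (append_cols A xs) (dim_col A + p) = xs ! p"
  by (rule eq_vecI) (auto simp: append_cols_def)

lemma binary_mat_append_cols:
  assumes "binary_mat A" "\<forall>x\<in>set xs. binary_vec x \<and> dim_vec x = dim_row A"
  shows "binary_mat (append_cols A xs)"
  unfolding binary_mat_def
proof (intro allI impI)
  fix i j assume i: "i < dim_row (append_cols A xs)" and j: "j < dim_col (append_cols A xs)"
  show "append_cols A xs $$ (i,j) \<in> {0,1}"
  proof (cases "j < dim_col A")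
    case True
    then show ?thesis using assms(1) i unfolding binary_mat_def append_cols_def by simp
  next
    case False
    then have "xs ! (j - dim_col A) \<in> set xs" using j by simp
    then show ?thesis using assms(2) i j False unfolding binary_vec_def append_cols_def by auto
  qed
qed

lemma spanning_set_append_cols_restrict:
  assumes "spanning_binary_set (append_cols A xs) X"
  shows "spanning_binary_set A X"
  using assms col_append_cols_old unfolding spanning_binary_set_def
  by (metis dim_append_cols trans_less_add1)

lemma spanning_set_append_cols:
  assumes sp: "spanning_binary_set A X"
    and xs: "\<forall>x\<in>set xs. dim_vec x = dim_row A \<and> bspans X x"
  shows "spanning_binary_set (append_cols A xs) X"
  unfolding spanning_binary_set_def
proof (intro conjI ballI allI impI)
  show "finite X" using sp unfolding spanning_binary_set_def by simp
next
  fix x assume "x \<in> X"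
  then show "binary_vec x" "dim_vec x = dim_row (append_cols A xs)"
    using sp unfolding spanning_binary_set_def by simp_all
next
  fix j assume j: "j < dim_col (append_cols A xs)"
  show "bspans X (col (append_cols A xs) j)"
  proof (cases "j < dim_col A")
    case True
    then show ?thesis using sp col_append_cols_old unfolding spanning_binary_set_def by simp
  next
    case False
    then obtain p where p: "j = dim_col A + p" "p < length xs"
      using j by (metis add_less_cancel_left dim_append_cols(2) le_add_diff_inverse not_less)
    then show ?thesis using xs col_append_cols_new[OF p(2)] by simp
  qed
qed

lemma binary_rank_append_cols_ge:
  assumes "binary_mat (append_cols A xs)"
  shows "binary_rank A \<le> binary_rank (append_cols A xs)"
proof -
  obtain X where "binary_base (append_cols A xs) X" using ex_binary_base[OF assms] .
  then show ?thesis
    using binary_base_iff[OF assms] binary_rank_le_card spanning_set_append_cols_restrict by metis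
qed

lemma bspans_col_of_rank_preserving:
  assumes bA: "binary_mat A" and U: "binary_base A U" and dis: "disjoint_in_rows U"
    and uniq: "unique_base_rows_sums A" and x: "binary_vec x" "dim_vec x = dim_row A"
    and rank: "binary_rank (append_cols A [x]) = binary_rank A"
  shows "bspans U x"
proof -
  let ?A = "append_cols A [x]"
  have bA': "binary_mat ?A" using binary_mat_append_cols[OF bA] x by simp
  obtain X where "binary_base ?A X" using ex_binary_base[OF bA'] .
  then have spX: "spanning_binary_set ?A X" and "card X = binary_rank A"
    using binary_base_iff[OF bA'] rank by simp_all
  then have "binary_base A X"
    using binary_base_iff[OF bA] spanning_set_append_cols_restrict by blast
  then have const: "\<forall>b\<in>X. constant_on_supports U (dim_row A) b"
    using base_vector_constant_on_supports[OF bA U dis uniq] by blast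
  have "bspans X (col ?A (dim_col A + 0))" using spX unfolding spanning_binary_set_def by simp
  then have "bspans X x" using col_append_cols_new[of 0 "[x]" A] x by simp
  then obtain S where S: "S \<subseteq> X" "\<forall>i<dim_row A. x $ i = (\<Sum>b\<in>S. b $ i)"
    using x unfolding bspans_def by auto
  then have "constant_on_supports U (dim_row A) x"
    using const constant_on_supports_sum[of S U "dim_row A" x] by blast
  moreover have "finite U" "\<forall>u\<in>U. binary_vec u \<and> dim_vec u = dim_row A"
    using U unfolding binary_base_def spanning_binary_set_def by simp_all
  ultimately show ?thesis using constant_on_supports_imp_bspans[OF dis] x by blast
qed

lemma augmentation_property_if_base_spans:
  assumes bA: "binary_mat A" and U: "binary_base A U"
    and spans: "\<And>x. binary_vec x \<Longrightarrow> dim_vec x = dim_row A \<Longrightarrow>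
      binary_rank (append_cols A [x]) = binary_rank A \<Longrightarrow> bspans U x"
  shows "augmentation_property A"
  unfolding augmentation_property_def
proof (intro allI impI)
  fix xs assume xs: "\<forall>x\<in>set xs. binary_vec x \<and> dim_vec x = dim_row A \<and>
      binary_rank (append_cols A [x]) = binary_rank A"
  have spU: "spanning_binary_set A U" and rankU: "card U = binary_rank A"
    using U binary_base_iff[OF bA] by simp_all
  have "spanning_binary_set (append_cols A xs) U"
    using spanning_set_append_cols[OF spU] spans xs by blast
  then have "binary_rank (append_cols A xs) \<le> binary_rank A"
    using binary_rank_le_card rankU by metis
  moreover have "binary_rank A \<le> binary_rank (append_cols A xs)"
    using binary_rank_append_cols_ge binary_mat_append_cols[OF bA] xs by blast
  ultimately show "binary_rank (append_cols A xs) = binary_rank A" by simp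
qed

theorem mainTheorem17:
  fixes A :: "nat mat" and U :: "nat vec set"
  assumes "binary_mat A"
    and "binary_base A U"
    and "disjoint_in_rows U"
    and "unique_base_rows_sums A"
  shows "(\<forall>B. binary_base A B \<longrightarrow> bspans_set U B) \<and> augmentation_property A"
proof
  note bA = assms(1) and U = assms(2) and dis = assms(3) and uniq = assms(4)
  have Ub: "finite U" "\<forall>u\<in>U. binary_vec u \<and> dim_vec u = dim_row A"
    using U unfolding binary_base_def spanning_binary_set_def by simp_all
  show "\<forall>B. binary_base A B \<longrightarrow> bspans_set U B"
  proof (intro allI impI)
    fix B assume B: "binary_base A B"
    then have "\<forall>b\<in>B. binary_vec b \<and> dim_vec b = dim_row A"
      unfolding binary_base_def spanning_binary_set_def by simp
    then show "bspans_set U B"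
      unfolding bspans_set_def
      using base_vector_constant_on_supports[OF bA U dis uniq B]
        constant_on_supports_imp_bspans[OF dis Ub(2,1)] by blast
  qed
  show "augmentation_property A"
    using augmentation_property_if_base_spans[OF bA U]
      bspans_col_of_rank_preserving[OF bA U dis uniq] by blast
qed

end
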